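(* Let $(X,\sigma)$ be a nondegenerate symplectic space and let $f,h\in X\setminus\{0\}$ with $f\notin\mathbb{R}h$. Then: (i) $R(1,f)\notin[\mathcal{R}(X,\sigma)R(1,h)]$; (ii) $\|R(1,f)-R(1,h)\|\ge1$, with equality if $\sigma(f,h)=0$; (iii) $\mathcal{R}(X,\sigma)$ is nonseparable.
   Context: $[\,\cdot\,]$ denotes closed linear span. The resolvent algebra: let $\mathcal{R}_0$ be the universal unital $*$-algebra generated by $R(\lambda,f)$, $\lambda\in\mathbb{R}\setminus\{0\}$, $f\in X$, subject to (for all $\lambda,\mu,\nu\neq0$, $f,g\in X$): $R(\lambda,0)=-\frac{i}{\lambda}\mathbb{1}$; $R(\lambda,f)^*=R(-\lambda,f)$; $\nu R(\nu\lambda,\nu f)=R(\lambda,f)$; $R(\lambda,f)-R(\mu,f)=i(\mu-\lambda)R(\lambda,f)R(\mu,f)$; $[R(\lambda,f),R(\mu,g)]=i\sigma(f,g)R(\lambda,f)R(\mu,g)^2R(\lambda,f)$; and, for $\lambda+\mu\neq0$, $R(\lambda,f)R(\mu,g)=R(\lambda+\mu,f+g)[R(\lambda,f)+R(\mu,g)+i\sigma(f,g)R(\lambda,f)^2R(\mu,g)]$. $\mathcal{R}(X,\sigma)$ is the C*-algebra obtained by factoring $\mathcal{R}_0$ by the kernel of the enveloping C*-seminorm and completing. *)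

theory Defs
  imports Complex_Main "HOL-Library.Countable_Set"
begin

definition nondeg_symplectic :: "('x::real_vector \<Rightarrow> 'x \<Rightarrow> real) \<Rightarrow> bool" where
  "nondeg_symplectic \<sigma> \<longleftrightarrow>
     (\<forall>g. linear (\<lambda>f. \<sigma> f g)) \<and> (\<forall>f. linear (\<sigma> f)) \<and>
     (\<forall>f g. \<sigma> f g = - \<sigma> g f) \<and>
     (\<forall>f. (\<forall>g. \<sigma> f g = 0) \<longrightarrow> f = 0)"

datatype 'x rexp =
    Gen real 'x          \<comment> \<open>R(lambda, f)\<close>
  | Unit
  | Add "'x rexp" "'x rexp"
  | Mul "'x rexp" "'x rexp"
  | Smul complex "'x rexp"
  | Adj "'x rexp"

definition Sub :: "'x rexp \<Rightarrow> 'x rexp \<Rightarrow> 'x rexp" where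
  "Sub a b = Add a (Smul (-1) b)"

definition Zero :: "'x rexp" where
  "Zero = Smul 0 Unit"

text \<open>The congruence whose quotient is the universal unital *-algebra R_0:
  unital complex *-algebra axioms plus the resolvent relations.
  The junk symbols Gen 0 f (lambda = 0 is not a generator) are set to zero.\<close>

inductive req :: "('x::real_vector \<Rightarrow> 'x \<Rightarrow> real) \<Rightarrow> 'x rexp \<Rightarrow> 'x rexp \<Rightarrow> bool"
  for \<sigma> where
  refl: "req \<sigma> a a"
| sym: "req \<sigma> a b \<Longrightarrow> req \<sigma> b a"
| trans: "req \<sigma> a b \<Longrightarrow> req \<sigma> b c \<Longrightarrow> req \<sigma> a c"
| cong_Add: "req \<sigma> a a' \<Longrightarrow> req \<sigma> b b' \<Longrightarrow> req \<sigma> (Add a b) (Add a' b')"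
| cong_Mul: "req \<sigma> a a' \<Longrightarrow> req \<sigma> b b' \<Longrightarrow> req \<sigma> (Mul a b) (Mul a' b')"
| cong_Smul: "req \<sigma> a a' \<Longrightarrow> req \<sigma> (Smul c a) (Smul c a')"
| cong_Adj: "req \<sigma> a a' \<Longrightarrow> req \<sigma> (Adj a) (Adj a')"
| add_assoc: "req \<sigma> (Add (Add a b) c) (Add a (Add b c))"
| add_comm: "req \<sigma> (Add a b) (Add b a)"
| add_zero: "req \<sigma> (Add a Zero) a"
| smul_zero: "req \<sigma> (Smul 0 a) Zero"
| smul_one: "req \<sigma> (Smul 1 a) a"
| smul_smul: "req \<sigma> (Smul c (Smul d a)) (Smul (c * d) a)"
| smul_add: "req \<sigma> (Smul c (Add a b)) (Add (Smul c a) (Smul c b))"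
| add_smul: "req \<sigma> (Smul (c + d) a) (Add (Smul c a) (Smul d a))"
| mul_assoc: "req \<sigma> (Mul (Mul a b) c) (Mul a (Mul b c))"
| mul_unit_left: "req \<sigma> (Mul Unit a) a"
| mul_unit_right: "req \<sigma> (Mul a Unit) a"
| distrib_left: "req \<sigma> (Mul a (Add b c)) (Add (Mul a b) (Mul a c))"
| distrib_right: "req \<sigma> (Mul (Add a b) c) (Add (Mul a c) (Mul b c))"
| smul_mul_left: "req \<sigma> (Mul (Smul c a) b) (Smul c (Mul a b))"
| smul_mul_right: "req \<sigma> (Mul a (Smul c b)) (Smul c (Mul a b))"
| adj_adj: "req \<sigma> (Adj (Adj a)) a"
| adj_add: "req \<sigma> (Adj (Add a b)) (Add (Adj a) (Adj b))"
| adj_smul: "req \<sigma> (Adj (Smul c a)) (Smul (cnj c) (Adj a))"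
| adj_mul: "req \<sigma> (Adj (Mul a b)) (Mul (Adj b) (Adj a))"
| gen_zero: "req \<sigma> (Gen 0 f) Zero"
| R1: "l \<noteq> 0 \<Longrightarrow> req \<sigma> (Gen l 0) (Smul (- \<i> / complex_of_real l) Unit)"
| R2: "l \<noteq> 0 \<Longrightarrow> req \<sigma> (Adj (Gen l f)) (Gen (- l) f)"
| R3: "l \<noteq> 0 \<Longrightarrow> \<nu> \<noteq> 0 \<Longrightarrow>
        req \<sigma> (Smul (complex_of_real \<nu>) (Gen (\<nu> * l) (\<nu> *\<^sub>R f))) (Gen l f)"
| R4: "l \<noteq> 0 \<Longrightarrow> \<mu> \<noteq> 0 \<Longrightarrow>
        req \<sigma> (Sub (Gen l f) (Gen \<mu> f))
              (Smul (\<i> * complex_of_real (\<mu> - l)) (Mul (Gen l f) (Gen \<mu> f)))"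
| R5: "l \<noteq> 0 \<Longrightarrow> \<mu> \<noteq> 0 \<Longrightarrow>
        req \<sigma> (Sub (Mul (Gen l f) (Gen \<mu> g)) (Mul (Gen \<mu> g) (Gen l f)))
              (Smul (\<i> * complex_of_real (\<sigma> f g))
                 (Mul (Mul (Gen l f) (Mul (Gen \<mu> g) (Gen \<mu> g))) (Gen l f)))"
| R6: "l \<noteq> 0 \<Longrightarrow> \<mu> \<noteq> 0 \<Longrightarrow> l + \<mu> \<noteq> 0 \<Longrightarrow>
        req \<sigma> (Mul (Gen l f) (Gen \<mu> g))
              (Mul (Gen (l + \<mu>) (f + g))
                 (Add (Add (Gen l f) (Gen \<mu> g))
                      (Smul (\<i> * complex_of_real (\<sigma> f g))
                         (Mul (Mul (Gen l f) (Gen l f)) (Gen \<mu> g)))))"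

definition cstar_seminorm :: "('x::real_vector \<Rightarrow> 'x \<Rightarrow> real) \<Rightarrow> ('x rexp \<Rightarrow> real) \<Rightarrow> bool" where
  "cstar_seminorm \<sigma> p \<longleftrightarrow>
     (\<forall>a b. req \<sigma> a b \<longrightarrow> p a = p b) \<and>
     (\<forall>a. 0 \<le> p a) \<and>
     (\<forall>a b. p (Add a b) \<le> p a + p b) \<and>
     (\<forall>c a. p (Smul c a) = cmod c * p a) \<and>
     (\<forall>a b. p (Mul a b) \<le> p a * p b) \<and>
     (\<forall>a. p (Mul (Adj a) a) = (p a)\<^sup>2)"

text \<open>Enveloping C*-seminorm: the supremum of all C*-seminorms; the C*-norm of
  the resolvent algebra on the (dense) image of R_0.\<close>
definition env_norm :: "('x::real_vector \<Rightarrow> 'x \<Rightarrow> real) \<Rightarrow> 'x rexp \<Rightarrow> real" where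
  "env_norm \<sigma> a = Sup {p a | p. cstar_seminorm \<sigma> p}"

fun lspan :: "(complex \<times> 'x rexp) list \<Rightarrow> 'x rexp \<Rightarrow> 'x rexp" where
  "lspan [] r = Zero"
| "lspan ((c, a) # xs) r = Add (Smul c (Mul a r)) (lspan xs r)"

text \<open>e lies in the closed linear span of R(X,sigma) r (in the completion).\<close>
definition in_closed_left_span :: "('x::real_vector \<Rightarrow> 'x \<Rightarrow> real) \<Rightarrow> 'x rexp \<Rightarrow> 'x rexp \<Rightarrow> bool" where
  "in_closed_left_span \<sigma> e r \<longleftrightarrow> (\<forall>\<epsilon>>0. \<exists>xs. env_norm \<sigma> (Sub e (lspan xs r)) < \<epsilon>)"

text \<open>R(X,sigma), the completion of R_0 / ker(env_norm), is separable.\<close>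
definition resolvent_algebra_separable :: "('x::real_vector \<Rightarrow> 'x \<Rightarrow> real) \<Rightarrow> bool" where
  "resolvent_algebra_separable \<sigma> \<longleftrightarrow>
     (\<exists>D. countable D \<and> (\<forall>a. \<forall>\<epsilon>>0. \<exists>d\<in>D. env_norm \<sigma> (Sub a d) < \<epsilon>))"

end

theory Submission
  imports Defs "HOL-Analysis.Continuum_Not_Denumerable"
begin

text \<open>For an isotropic subspace \<open>S\<close>, sending \<open>R(\<lambda>,f)\<close> to \<open>-i/\<lambda>\<close> if \<open>f \<in> S\<close> and to \<open>0\<close>
  otherwise is compatible with all defining relations, so it gives a character \<open>\<chi>\<^sub>S\<close> of
  \<open>R\<^sub>0\<close>, and \<open>|\<chi>\<^sub>S|\<close> is a C*-seminorm bounded by the enveloping one. Taking \<open>S = \<real>h\<close> gives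
  \<open>\<parallel>R(1,f) - R(1,h)\<parallel> \<ge> |0 - (-i)| = 1\<close>; taking \<open>S = \<real>f\<close>, which kills the left ideal
  generated by \<open>R(1,h)\<close> but not \<open>R(1,f)\<close>, gives (i). Conversely \<open>R(1,f) + i/2\<close> is \<open>i/2\<close> times
  a unitary, so the triangle inequality gives \<open>\<parallel>R(1,f) - R(1,h)\<parallel> \<le> 1\<close> (for any \<open>\<sigma> f h\<close>).
  Finally the generators \<open>R(1, f + t h)\<close>, \<open>t \<in> \<real>\<close>, are pairwise non-proportional, hence
  pairwise at distance at least \<open>1\<close>, and there are uncountably many of them.\<close>

declare req.trans[trans]

subsection \<open>Characters from isotropic subspaces\<close>

definition isotropic :: "('x::real_vector \<Rightarrow> 'x \<Rightarrow> real) \<Rightarrow> 'x set \<Rightarrow> bool" where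
  "isotropic \<sigma> S \<longleftrightarrow> (\<forall>f\<in>S. \<forall>g\<in>S. \<sigma> f g = 0)"

primrec resolvent_char :: "'x set \<Rightarrow> 'x rexp \<Rightarrow> complex" where
  "resolvent_char S (Gen l f) = (if l \<noteq> 0 \<and> f \<in> S then - \<i> / complex_of_real l else 0)"
| "resolvent_char S Unit = 1"
| "resolvent_char S (Add a b) = resolvent_char S a + resolvent_char S b"
| "resolvent_char S (Mul a b) = resolvent_char S a * resolvent_char S b"
| "resolvent_char S (Smul c a) = c * resolvent_char S a"
| "resolvent_char S (Adj a) = cnj (resolvent_char S a)"

lemma resolvent_char_Zero [simp]: "resolvent_char S Zero = 0"
  by (simp add: Zero_def)

lemma resolvent_char_Sub [simp]: "resolvent_char S (Sub a b) = resolvent_char S a - resolvent_char S b"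
  by (simp add: Sub_def)

lemma resolvent_char_lspan: "resolvent_char S r = 0 \<Longrightarrow> resolvent_char S (lspan xs r) = 0"
  by (induction xs) auto

lemma subspace_scaleR_iff: "subspace S \<Longrightarrow> c \<noteq> 0 \<Longrightarrow> c *\<^sub>R x \<in> S \<longleftrightarrow> x \<in> S"
  using subspace_scale[of S "c *\<^sub>R x" "inverse c"] subspace_scale[of S x c] by auto

lemma subspace_add_iff_left: "subspace S \<Longrightarrow> x \<in> S \<Longrightarrow> x + y \<in> S \<longleftrightarrow> y \<in> S"
  using subspace_add[of S x y] subspace_diff[of S "x + y" x] by auto

lemma resolvent_char_req:
  assumes S: "subspace S" "isotropic \<sigma> S" and "req \<sigma> a b"
  shows "resolvent_char S a = resolvent_char S b"
  using assms(3)
proof (induction rule: req.induct)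
  case (R1 l)
  then show ?case using subspace_0[OF S(1)] by simp
next
  case (R3 l \<nu> f)
  then show ?case using subspace_scaleR_iff[OF S(1)] by (auto simp: field_simps)
next
  case (R4 l \<mu> f)
  then show ?case by (auto simp: field_simps)
next
  case (R5 l \<mu> f g)
  then show ?case using S(2) by (auto simp: isotropic_def)
next
  case (R6 l \<mu> f g)
  show ?case
  proof (cases "f \<in> S \<and> g \<in> S")
    case True
    then have "f + g \<in> S" "\<sigma> f g = 0"
      using S subspace_add by (auto simp: isotropic_def)
    moreover have "complex_of_real l + complex_of_real \<mu> \<noteq> 0"
      using R6 by (metis of_real_add of_real_eq_0_iff)
    ultimately show ?thesis
      using R6 True by (simp add: field_simps)
  next
    case False
    then show ?thesis
      using subspace_add_iff_left[OF S(1), of f g] subspace_add_iff_left[OF S(1), of g f]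
      by (auto simp: add.commute)
  qed
qed (simp_all add: Zero_def ring_distribs)

lemma isotropic_span_singleton:
  assumes "nondeg_symplectic \<sigma>"
  shows "isotropic \<sigma> (span {g})"
proof -
  have "linear (\<lambda>f. \<sigma> f y)" "linear (\<sigma> x)" for x y
    using assms unfolding nondeg_symplectic_def by blast+
  then have bilinear: "\<sigma> (a *\<^sub>R x) (b *\<^sub>R y) = a * b * \<sigma> x y" for a b x y
    using linear_scale[of "\<lambda>f. \<sigma> f (b *\<^sub>R y)" a x] linear_scale[of "\<sigma> x" b y] by simp
  have "\<sigma> g g = - \<sigma> g g"
    using assms unfolding nondeg_symplectic_def by blast
  then show ?thesis
    by (auto simp: isotropic_def span_singleton bilinear)
qed

lemma
  assumes "cstar_seminorm \<sigma> p"
  shows cstar_seminorm_req: "req \<sigma> a b \<Longrightarrow> p a = p b"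
    and cstar_seminorm_nonneg: "0 \<le> p a"
    and cstar_seminorm_Add: "p (Add a b) \<le> p a + p b"
    and cstar_seminorm_Smul: "p (Smul c a) = cmod c * p a"
    and cstar_seminorm_Mul: "p (Mul a b) \<le> p a * p b"
    and cstar_seminorm_Adj_Mul: "p (Mul (Adj a) a) = (p a)\<^sup>2"
  using assms by (simp_all add: cstar_seminorm_def)

lemma cstar_seminorm_Sub: "cstar_seminorm \<sigma> p \<Longrightarrow> p (Sub a b) \<le> p a + p b"
  using cstar_seminorm_Add[of \<sigma> p a "Smul (-1) b"] cstar_seminorm_Smul[of \<sigma> p "-1" b]
  by (simp add: Sub_def)

lemma cstar_seminorm_Zero: "cstar_seminorm \<sigma> p \<Longrightarrow> p Zero = 0"
  by (simp add: Zero_def cstar_seminorm_Smul)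

lemma cstar_seminorm_zero: "cstar_seminorm \<sigma> (\<lambda>_. 0)"
  by (simp add: cstar_seminorm_def)

lemma cstar_seminorm_resolvent_char:
  assumes "subspace S" "isotropic \<sigma> S"
  shows "cstar_seminorm \<sigma> (\<lambda>a. cmod (resolvent_char S a))"
  using resolvent_char_req[OF assms]
  by (auto simp: cstar_seminorm_def norm_triangle_ineq norm_mult power2_eq_square)

lemma cstar_seminorm_le_Adj:
  assumes p: "cstar_seminorm \<sigma> p"
  shows "p a \<le> p (Adj a)"
proof -
  have "p a * p a \<le> p (Adj a) * p a"
    using cstar_seminorm_Adj_Mul[OF p, of a] cstar_seminorm_Mul[OF p, of "Adj a" a]
    by (simp add: power2_eq_square)
  then show ?thesis
    using cstar_seminorm_nonneg[OF p, of a]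
    by (cases "p a = 0") (auto simp: cstar_seminorm_nonneg[OF p])
qed

lemma cstar_seminorm_Adj:
  assumes p: "cstar_seminorm \<sigma> p"
  shows "p (Adj a) = p a"
  using cstar_seminorm_le_Adj[OF p, of a] cstar_seminorm_le_Adj[OF p, of "Adj a"]
    cstar_seminorm_req[OF p req.adj_adj[of \<sigma> a]]
  by simp

text \<open>From the resolvent identity, \<open>R(\<lambda>,f)\<^sup>* R(\<lambda>,f) = (R(-\<lambda>,f) - R(\<lambda>,f)) / (2i\<lambda>)\<close>, so
  \<open>p(R)\<^sup>2 \<le> p(R) / |\<lambda>|\<close>.\<close>
lemma cstar_seminorm_Gen_le:
  assumes p: "cstar_seminorm \<sigma> p" and l: "l \<noteq> 0"
  shows "p (Gen l f) \<le> 1 / \<bar>l\<bar>"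
proof -
  let ?r = "Gen l f" and ?r' = "Gen (-l) f"
  define k where "k = 1 / (\<i> * complex_of_real (l - - l))"
  have "req \<sigma> (Smul k (Sub ?r' ?r)) (Smul k (Smul (\<i> * complex_of_real (l - - l)) (Mul ?r' ?r)))"
    using req.R4[of "-l" l \<sigma> f] l by (intro req.cong_Smul) simp
  also have "req \<sigma> \<dots> (Smul (k * (\<i> * complex_of_real (l - - l))) (Mul ?r' ?r))"
    by (rule req.smul_smul)
  also have "k * (\<i> * complex_of_real (l - - l)) = 1"
    unfolding k_def using l by simp
  also have "req \<sigma> (Smul 1 (Mul ?r' ?r)) (Mul ?r' ?r)"
    by (rule req.smul_one)
  also have "req \<sigma> (Mul ?r' ?r) (Mul (Adj ?r) ?r)"
    using l by (intro req.cong_Mul req.sym[OF req.R2] req.refl)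
  finally have adj_mul: "req \<sigma> (Smul k (Sub ?r' ?r)) (Mul (Adj ?r) ?r)" .
  have "(p ?r)\<^sup>2 = cmod k * p (Sub ?r' ?r)"
    using cstar_seminorm_Adj_Mul[OF p] cstar_seminorm_req[OF p adj_mul] cstar_seminorm_Smul[OF p]
    by simp
  also have "\<dots> \<le> cmod k * (p ?r' + p ?r)"
    by (rule mult_left_mono[OF cstar_seminorm_Sub[OF p]]) simp
  also have "p ?r' = p ?r"
    using cstar_seminorm_req[OF p req.R2[OF l, of \<sigma> f]] cstar_seminorm_Adj[OF p] by simp
  also have "cmod k = 1 / (2 * \<bar>l\<bar>)"
    unfolding k_def by (simp add: norm_divide norm_mult)
  finally have "p ?r * p ?r \<le> (1 / \<bar>l\<bar>) * p ?r"
    by (simp add: power2_eq_square)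
  then show ?thesis
    using cstar_seminorm_nonneg[OF p, of ?r]
    by (cases "p ?r = 0") (auto intro: mult_right_le_imp_le)
qed

lemma cstar_seminorm_Unit_le:
  assumes p: "cstar_seminorm \<sigma> p"
  shows "p Unit \<le> 1"
proof -
  have "req \<sigma> (Smul \<i> (Gen 1 0)) (Smul \<i> (Smul (-\<i>) Unit))"
    using req.R1[of 1 \<sigma>] by (intro req.cong_Smul) simp
  also have "req \<sigma> \<dots> (Smul (\<i> * - \<i>) Unit)"
    by (rule req.smul_smul)
  also have "\<i> * - \<i> = 1"
    by simp
  also have "req \<sigma> (Smul 1 Unit) Unit"
    by (rule req.smul_one)
  finally have "p Unit = p (Gen 1 0)"
    using cstar_seminorm_req[OF p] cstar_seminorm_Smul[OF p] by (metis mult_1 norm_ii)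
  then show ?thesis
    using cstar_seminorm_Gen_le[OF p, of 1] by simp
qed

primrec gen_bound :: "'x rexp \<Rightarrow> real" where
  "gen_bound (Gen l f) = (if l = 0 then 0 else 1 / \<bar>l\<bar>)"
| "gen_bound Unit = 1"
| "gen_bound (Add a b) = gen_bound a + gen_bound b"
| "gen_bound (Mul a b) = gen_bound a * gen_bound b"
| "gen_bound (Smul c a) = cmod c * gen_bound a"
| "gen_bound (Adj a) = gen_bound a"

lemma cstar_seminorm_le_gen_bound:
  assumes p: "cstar_seminorm \<sigma> p"
  shows "p a \<le> gen_bound a"
proof (induction a)
  case (Gen l f)
  show ?case
  proof (cases "l = 0")
    case True
    then show ?thesis
      using cstar_seminorm_req[OF p req.gen_zero[of \<sigma> f]] cstar_seminorm_Zero[OF p] by simp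
  qed (use cstar_seminorm_Gen_le[OF p] in simp)
next
  case Unit
  then show ?case using cstar_seminorm_Unit_le[OF p] by simp
next
  case (Add a b)
  then show ?case using cstar_seminorm_Add[OF p, of a b] by simp
next
  case (Mul a b)
  then show ?case using cstar_seminorm_Mul[OF p, of a b] cstar_seminorm_nonneg[OF p]
    by simp (meson mult_mono order_trans)
next
  case (Smul c a)
  then show ?case using cstar_seminorm_Smul[OF p] by (simp add: mult_left_mono)
next
  case (Adj a)
  then show ?case using cstar_seminorm_Adj[OF p] by simp
qed

lemma cstar_seminorm_le_env_norm:
  assumes "cstar_seminorm \<sigma> p"
  shows "p a \<le> env_norm \<sigma> a"
  unfolding env_norm_def
proof (rule cSup_upper)
  show "p a \<in> {p a |p. cstar_seminorm \<sigma> p}"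
    using assms by blast
  show "bdd_above {p a |p. cstar_seminorm \<sigma> p}"
    by (rule bdd_aboveI[of _ "gen_bound a"]) (auto dest: cstar_seminorm_le_gen_bound)
qed

lemma env_norm_le:
  assumes "\<And>p. cstar_seminorm \<sigma> p \<Longrightarrow> p a \<le> c"
  shows "env_norm \<sigma> a \<le> c"
  unfolding env_norm_def
  using assms cstar_seminorm_zero by (intro cSup_least) auto

lemma norm_resolvent_char_span_le_env_norm:
  assumes "nondeg_symplectic \<sigma>"
  shows "cmod (resolvent_char (span {g}) a) \<le> env_norm \<sigma> a"
  by (rule cstar_seminorm_le_env_norm[OF cstar_seminorm_resolvent_char])
    (simp_all add: isotropic_span_singleton[OF assms])

subsection \<open>The Cayley bound\<close>

lemma req_adj_unit: "req \<sigma> (Adj Unit) Unit"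
proof -
  have "req \<sigma> (Adj Unit) (Mul (Adj Unit) Unit)"
    by (rule req.sym[OF req.mul_unit_right])
  also have "req \<sigma> \<dots> (Mul (Adj Unit) (Adj (Adj Unit)))"
    by (intro req.cong_Mul req.refl req.sym[OF req.adj_adj])
  also have "req \<sigma> \<dots> (Adj (Mul (Adj Unit) Unit))"
    by (rule req.sym[OF req.adj_mul])
  also have "req \<sigma> \<dots> (Adj (Adj Unit))"
    by (intro req.cong_Adj req.mul_unit_right)
  also have "req \<sigma> \<dots> Unit"
    by (rule req.adj_adj)
  finally show ?thesis .
qed

lemma req_add_swap: "req \<sigma> (Add (Add x y) z) (Add (Add x z) y)"
proof -
  have "req \<sigma> (Add (Add x y) z) (Add x (Add y z))"
    by (rule req.add_assoc)
  also have "req \<sigma> \<dots> (Add x (Add z y))"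
    by (intro req.cong_Add req.refl req.add_comm)
  also have "req \<sigma> \<dots> (Add (Add x z) y)"
    by (rule req.sym[OF req.add_assoc])
  finally show ?thesis .
qed

lemma req_zero_add: "req \<sigma> (Add Zero x) x"
  using req.trans[OF req.add_comm req.add_zero] .

lemma req_smul_add_cancel:
  assumes "c + d = 0"
  shows "req \<sigma> (Add (Smul c x) (Smul d x)) Zero"
proof -
  have "req \<sigma> (Add (Smul c x) (Smul d x)) (Smul (c + d) x)"
    by (rule req.sym[OF req.add_smul])
  then show ?thesis
    using assms req.smul_zero by (metis req.trans)
qed

lemma req_smul_unit_mul: "req \<sigma> (Mul (Smul c Unit) a) (Smul c a)"
  using req.trans[OF req.smul_mul_left req.cong_Smul[OF req.mul_unit_left]] .

lemma req_mul_smul_unit: "req \<sigma> (Mul a (Smul c Unit)) (Smul c a)"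
  using req.trans[OF req.smul_mul_right req.cong_Smul[OF req.mul_unit_right]] .

lemma req_Sub_shift: "req \<sigma> (Add (Add a c) (Smul (-1) (Add b c))) (Sub a b)"
proof -
  have "req \<sigma> (Add (Add a c) (Smul (-1) (Add b c))) (Add (Add a c) (Add (Smul (-1) c) (Smul (-1) b)))"
    by (rule req.cong_Add[OF req.refl req.trans[OF req.smul_add req.add_comm]])
  also have "req \<sigma> \<dots> (Add (Add (Add a c) (Smul (-1) c)) (Smul (-1) b))"
    by (rule req.sym[OF req.add_assoc])
  also have "req \<sigma> \<dots> (Add (Add a (Add (Smul 1 c) (Smul (-1) c))) (Smul (-1) b))"
    by (rule req.cong_Add[OF req.trans[OF req.add_assoc
          req.cong_Add[OF req.refl req.cong_Add[OF req.sym[OF req.smul_one] req.refl]]] req.refl])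
  also have "req \<sigma> \<dots> (Add (Add a Zero) (Smul (-1) b))"
    by (rule req.cong_Add[OF req.cong_Add[OF req.refl req_smul_add_cancel] req.refl]) simp
  also have "req \<sigma> \<dots> (Sub a b)"
    unfolding Sub_def by (rule req.cong_Add[OF req.add_zero req.refl])
  finally show ?thesis .
qed

text \<open>With \<open>R = R(1,f)\<close>, the resolvent identity \<open>R\<^sup>* R = (i/2)R - (i/2)R\<^sup>*\<close> makes
  \<open>(R + i/2)\<^sup>*(R + i/2) = 1/4\<close>.\<close>
lemma req_Gen_shift_adj_mul:
  fixes f :: "'x::real_vector"
  defines "a \<equiv> Add (Gen 1 f) (Smul (\<i>/2) Unit)"
  shows "req \<sigma> (Mul (Adj a) a) (Smul (1/4) Unit)"
proof -
  let ?r = "Gen 1 f" and ?r' = "Gen (-1) f"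
  define c :: complex where "c = \<i>/2"
  define d :: complex where "d = -\<i>/2"
  let ?C = "Smul c Unit" and ?D = "Smul d Unit"
  have adj: "req \<sigma> (Adj (Add ?r ?C)) (Add ?r' ?D)"
  proof -
    have "req \<sigma> (Adj (Add ?r ?C)) (Add (Adj ?r) (Adj ?C))"
      by (rule req.adj_add)
    also have "req \<sigma> \<dots> (Add ?r' (Smul (cnj c) (Adj Unit)))"
      by (intro req.cong_Add req.R2 req.adj_smul) simp
    also have "req \<sigma> \<dots> (Add ?r' (Smul (cnj c) Unit))"
      by (intro req.cong_Add req.refl req.cong_Smul req_adj_unit)
    also have "cnj c = d"
      unfolding c_def d_def by (simp add: complex_eq_iff)
    finally show ?thesis .
  qed
  have resolvent: "req \<sigma> (Mul ?r' ?r) (Add (Smul d ?r') (Smul c ?r))"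
  proof -
    have R4: "req \<sigma> (Sub ?r' ?r) (Smul (\<i> * complex_of_real (1 - - 1)) (Mul ?r' ?r))"
      using req.R4[of "-1" 1 \<sigma> f] by simp
    have "req \<sigma> (Mul ?r' ?r) (Smul 1 (Mul ?r' ?r))"
      by (rule req.sym[OF req.smul_one])
    also have "(1::complex) = d * (\<i> * complex_of_real (1 - - 1))"
      unfolding d_def by simp
    also have "req \<sigma> (Smul \<dots> (Mul ?r' ?r)) (Smul d (Smul (\<i> * complex_of_real (1 - - 1)) (Mul ?r' ?r)))"
      by (rule req.sym[OF req.smul_smul])
    also have "req \<sigma> \<dots> (Smul d (Sub ?r' ?r))"
      by (intro req.cong_Smul req.sym[OF R4])
    also have "req \<sigma> \<dots> (Add (Smul d ?r') (Smul d (Smul (-1) ?r)))"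
      unfolding Sub_def by (rule req.smul_add)
    also have "req \<sigma> \<dots> (Add (Smul d ?r') (Smul (d * -1) ?r))"
      by (intro req.cong_Add req.refl req.smul_smul)
    also have "d * -1 = c"
      unfolding c_def d_def by simp
    finally show ?thesis .
  qed
  have "req \<sigma> (Mul (Adj a) a) (Mul (Add ?r' ?D) (Add ?r ?C))"
    unfolding a_def c_def[symmetric] by (intro req.cong_Mul adj req.refl)
  also have "req \<sigma> \<dots> (Add (Mul ?r' (Add ?r ?C)) (Mul ?D (Add ?r ?C)))"
    by (rule req.distrib_right)
  also have "req \<sigma> \<dots> (Add (Add (Mul ?r' ?r) (Mul ?r' ?C)) (Add (Mul ?D ?r) (Mul ?D ?C)))"
    by (intro req.cong_Add req.distrib_left)
  also have "req \<sigma> \<dots> (Add (Add (Add (Smul d ?r') (Smul c ?r)) (Smul c ?r')) (Add (Smul d ?r) (Smul d ?C)))"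
    by (intro req.cong_Add resolvent req_mul_smul_unit req_smul_unit_mul)
  also have "req \<sigma> \<dots> (Add (Add (Add (Smul d ?r') (Smul c ?r')) (Smul c ?r)) (Add (Smul d ?r) (Smul (d * c) Unit)))"
    by (intro req.cong_Add req_add_swap req.refl req.smul_smul)
  also have "req \<sigma> \<dots> (Add (Add Zero (Smul c ?r)) (Add (Smul d ?r) (Smul (d * c) Unit)))"
    by (intro req.cong_Add req.refl req_smul_add_cancel) (simp add: c_def d_def)
  also have "req \<sigma> \<dots> (Add (Smul c ?r) (Add (Smul d ?r) (Smul (d * c) Unit)))"
    by (intro req.cong_Add req.refl req_zero_add)
  also have "req \<sigma> \<dots> (Add (Add (Smul c ?r) (Smul d ?r)) (Smul (d * c) Unit))"
    by (rule req.sym[OF req.add_assoc])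
  also have "req \<sigma> \<dots> (Add Zero (Smul (d * c) Unit))"
    by (intro req.cong_Add req.refl req_smul_add_cancel) (simp add: c_def d_def)
  also have "req \<sigma> \<dots> (Smul (d * c) Unit)"
    by (rule req_zero_add)
  also have "d * c = 1/4"
    unfolding c_def d_def by simp
  finally show ?thesis .
qed

lemma cstar_seminorm_Gen_shift_le:
  assumes p: "cstar_seminorm \<sigma> p"
  shows "p (Add (Gen 1 f) (Smul (\<i>/2) Unit)) \<le> 1/2"
proof -
  let ?a = "Add (Gen 1 f) (Smul (\<i>/2) Unit)"
  have "(p ?a)\<^sup>2 = 1/4 * p Unit"
    using cstar_seminorm_Adj_Mul[OF p] cstar_seminorm_req[OF p req_Gen_shift_adj_mul]
      cstar_seminorm_Smul[OF p] by simp
  also have "\<dots> \<le> (1/2)\<^sup>2"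
    using cstar_seminorm_Unit_le[OF p] by (simp add: power2_eq_square)
  finally show ?thesis
    by (rule power2_le_imp_le) simp
qed

lemma cstar_seminorm_Gen_diff_le:
  assumes p: "cstar_seminorm \<sigma> p"
  shows "p (Sub (Gen 1 f) (Gen 1 h)) \<le> 1"
proof -
  let ?C = "Smul (\<i>/2) Unit"
  have "p (Sub (Gen 1 f) (Gen 1 h)) = p (Add (Add (Gen 1 f) ?C) (Smul (-1) (Add (Gen 1 h) ?C)))"
    using cstar_seminorm_req[OF p req_Sub_shift] by simp
  also have "\<dots> \<le> p (Add (Gen 1 f) ?C) + p (Add (Gen 1 h) ?C)"
    using cstar_seminorm_Add[OF p] cstar_seminorm_Smul[OF p] by (metis norm_minus_cancel norm_one mult_1)
  also have "\<dots> \<le> 1"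
    using cstar_seminorm_Gen_shift_le[OF p, of f] cstar_seminorm_Gen_shift_le[OF p, of h] by simp
  finally show ?thesis .
qed

lemma not_in_closed_left_span_Gen:
  assumes "nondeg_symplectic \<sigma>" and "h \<notin> span {f}"
  shows "\<not> in_closed_left_span \<sigma> (Gen 1 f) (Gen 1 h)"
proof
  assume "in_closed_left_span \<sigma> (Gen 1 f) (Gen 1 h)"
  then obtain xs where close: "env_norm \<sigma> (Sub (Gen 1 f) (lspan xs (Gen 1 h))) < 1"
    unfolding in_closed_left_span_def using zero_less_one by blast
  have "resolvent_char (span {f}) (lspan xs (Gen 1 h)) = 0"
    using assms(2) by (intro resolvent_char_lspan) simp
  then have "cmod (resolvent_char (span {f}) (Sub (Gen 1 f) (lspan xs (Gen 1 h)))) = 1"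
    by (simp add: span_base)
  then show False
    using norm_resolvent_char_span_le_env_norm[OF assms(1)] close by (metis not_less)
qed

lemma env_norm_Gen_diff:
  assumes "nondeg_symplectic \<sigma>" and "f \<notin> span {h}"
  shows "env_norm \<sigma> (Sub (Gen 1 f) (Gen 1 h)) = 1"
proof (rule antisym)
  show "env_norm \<sigma> (Sub (Gen 1 f) (Gen 1 h)) \<le> 1"
    by (rule env_norm_le[OF cstar_seminorm_Gen_diff_le])
  have "cmod (resolvent_char (span {h}) (Sub (Gen 1 f) (Gen 1 h))) = 1"
    using assms(2) by (simp add: span_base)
  then show "1 \<le> env_norm \<sigma> (Sub (Gen 1 f) (Gen 1 h))"
    using norm_resolvent_char_span_le_env_norm[OF assms(1)] by metis
qed

lemma line_not_in_span_line:
  fixes f h :: "'x::real_vector"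
  assumes "f \<notin> span {h}" and "h \<noteq> 0" and "s \<noteq> t"
  shows "f + s *\<^sub>R h \<notin> span {f + t *\<^sub>R h}"
proof
  assume "f + s *\<^sub>R h \<in> span {f + t *\<^sub>R h}"
  then obtain r where "f + s *\<^sub>R h = r *\<^sub>R (f + t *\<^sub>R h)"
    by (auto simp: span_singleton)
  then have eq: "(1 - r) *\<^sub>R f = (r * t - s) *\<^sub>R h"
    by (simp add: algebra_simps)
  show False
  proof (cases "r = 1")
    case True
    then show False
      using eq assms(2,3) by (auto simp: algebra_simps)
  next
    case False
    then have "f = ((r * t - s) / (1 - r)) *\<^sub>R h"
      using eq by (metis (no_types, lifting) divide_inverse_commute eq_vector_fraction_iff right_minus_eq)
    then show False
      using assms(1) by (auto simp: span_singleton)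
  qed
qed

lemma not_resolvent_algebra_separable:
  fixes \<sigma> :: "'x::real_vector \<Rightarrow> 'x \<Rightarrow> real" and f h :: 'x
  assumes "nondeg_symplectic \<sigma>" and "f \<notin> span {h}" and "h \<noteq> 0"
  shows "\<not> resolvent_algebra_separable \<sigma>"
proof
  assume "resolvent_algebra_separable \<sigma>"
  then obtain D where D: "countable D" "\<And>a \<epsilon>. \<epsilon> > 0 \<Longrightarrow> \<exists>d\<in>D. env_norm \<sigma> (Sub a d) < \<epsilon>"
    unfolding resolvent_algebra_separable_def by blast
  define g where "g t = f + t *\<^sub>R h" for t :: real
  have "\<forall>t. \<exists>d\<in>D. env_norm \<sigma> (Sub (Gen 1 (g t)) d) < 1/2"
    using D(2)[of "1/2"] by simp
  then obtain dd where dd: "\<And>t. dd t \<in> D" "\<And>t. env_norm \<sigma> (Sub (Gen 1 (g t)) (dd t)) < 1/2"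
    by metis
  have "\<not> inj dd"
  proof
    assume "inj dd"
    moreover have "countable (range dd)"
      using D(1) dd(1) by (meson countable_subset image_subsetI)
    ultimately show False
      using uncountable_UNIV_real countable_image_inj_on by blast
  qed
  then obtain s t where st: "s \<noteq> t" "dd s = dd t"
    unfolding inj_def by blast
  let ?\<chi> = "resolvent_char (span {g t})"
  have "g s \<notin> span {g t}"
    unfolding g_def using line_not_in_span_line[OF assms(2,3) st(1)] .
  then have "cmod (?\<chi> (dd t)) < 1/2"
    using norm_resolvent_char_span_le_env_norm[OF assms(1), of "g t" "Sub (Gen 1 (g s)) (dd s)"]
      dd(2)[of s] st(2) by simp
  moreover have "cmod (- \<i> - ?\<chi> (dd t)) < 1/2"
    using norm_resolvent_char_span_le_env_norm[OF assms(1), of "g t" "Sub (Gen 1 (g t)) (dd t)"]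
      dd(2)[of t] by (simp add: span_base)
  ultimately show False
    using norm_triangle_ineq[of "- \<i> - ?\<chi> (dd t)" "?\<chi> (dd t)"] by simp
qed

theorem theorem5p3:
  fixes \<sigma> :: "'x::real_vector \<Rightarrow> 'x \<Rightarrow> real" and f h :: 'x
  assumes "nondeg_symplectic \<sigma>"
    and "f \<noteq> 0" and "h \<noteq> 0"
    and "f \<notin> range (\<lambda>t::real. t *\<^sub>R h)"
  shows "(\<not> in_closed_left_span \<sigma> (Gen 1 f) (Gen 1 h))
    \<and> env_norm \<sigma> (Sub (Gen 1 f) (Gen 1 h)) \<ge> 1
    \<and> (\<sigma> f h = 0 \<longrightarrow> env_norm \<sigma> (Sub (Gen 1 f) (Gen 1 h)) = 1)
    \<and> \<not> resolvent_algebra_separable \<sigma>"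
proof -
  have f_h: "f \<notin> span {h}"
    using assms(4) by (simp add: span_singleton)
  have h_f: "h \<notin> span {f}"
    using in_span_insert[of h f "{}"] f_h assms(3) by auto
  show ?thesis
    using not_in_closed_left_span_Gen[OF assms(1) h_f] env_norm_Gen_diff[OF assms(1) f_h]
      not_resolvent_algebra_separable[OF assms(1) f_h assms(3)]
    by simp
qed

end
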